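(* Let $P_{\mathrm{app}}=\sum_{i=0}^na_iX^i\in K[X]$ be monic of degree $n$, and let $0<d<n$ be such that $(d,\mathrm{val}(a_d))$ is an extremal point of $\mathrm{NP}(P_{\mathrm{app}})$, with $a_j\ne0$ for some $j<d$. Let $\varphi_P$ be a Newton function of degree $n-1$ which is nondegenerate for $P_{\mathrm{app}}$, in the following sense: - $\varphi_P\ge\mathrm{NF}(P_{\mathrm{app}})$ on $[0,n-1]$; - $\varphi_P(x)>y$ for every extremal point $(x,y)$ of $\mathrm{NP}(P_{\mathrm{app}})$ with $x\le n-1$. Let $\varphi$ be as defined in the context and set $$\delta=\min_{x\in[0,n-1]}\big(\varphi_P(x)-\varphi(x)\big).$$ Assume $\delta>0$. Let $\delta P\in K_{\le n-1}[X]$ satisfy $\mathrm{val}(c_i)\ge\varphi_P(i)$ for all $0\le i\le n-1$, where $c_i$ is the coefficient of $X^i$ in $\delta P$, and put $P=P_{\mathrm{app}}+\delta P$. Then $\mathrm{NF}(P)=\mathrm{NF}(P_{\mathrm{app}})$. Let $A^{(1)}$ (resp. $A^{(1)}_{\mathrm{app}}$) be the unique monic divisor of $P$ (resp. of $P_{\mathrm{app}}$) of degree $d$ whose Newton function is $\mathrm{NF}(P_{\mathrm{app}})|_{[0,d]}-\mathrm{NF}(P_{\mathrm{app}})(d)$. Then for every $0\le i\le d-1$, the coefficient of $X^i$ in $A^{(1)}-A^{(1)}_{\mathrm{app}}$ has valuation at least $\varphi(i)-\varphi(d)+\delta$.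
   Context: $K$ is a complete discrete valuation field with valuation $\mathrm{val}:K\to\mathbb Z\cup\{+\infty\}$, normalized to be surjective. $K_{\le m}[X]$ denotes the polynomials of degree at most $m$. For $Q=\sum q_iX^i\in K[X]$ nonzero of degree $m$, $\mathrm{NF}(Q):[0,m]\to\mathbb R\cup\{+\infty\}$ is the greatest convex function with $\mathrm{NF}(Q)(i)\le\mathrm{val}(q_i)$ for all $0\le i\le m$. Its epigraph is the Newton polygon $\mathrm{NP}(Q)$, and an extremal point is a vertex of it. A Newton function of degree $m$ is a convex, piecewise affine function $[0,m]\to\mathbb R\cup\{+\infty\}$, finite at $m$, whose epigraph has extremal points with integral abscissae. Set $\lambda_0=\mathrm{NF}(P_{\mathrm{app}})(d)-\mathrm{NF}(P_{\mathrm{app}})(d-1)$. The function $\varphi:[0,+\infty)\to\mathbb R\cup\{+\infty\}$ is defined by $\varphi(x)=\mathrm{NF}(P_{\mathrm{app}})(x)$ for $x\le d$ and $\varphi(x)=\lambda_0(x-d)+\mathrm{NF}(P_{\mathrm{app}})(d)$ for $x>d$. Existence and uniqueness of the monic divisors in the statement: a polynomial whose Newton polygon has an extremal point at abscissa $d$ has a unique monic divisor of degree $d$ whose Newton function is the restriction of its own Newton function to $[0,d]$, shifted by a constant so that its value at $d$ is $0$. *)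

theory Defs
  imports "HOL-Analysis.Analysis" "HOL-Computational_Algebra.Polynomial"
begin

definition discrete_valuation :: "('k::field \<Rightarrow> ereal) \<Rightarrow> bool" where
  "discrete_valuation val \<longleftrightarrow>
     (\<forall>x. val x = \<infinity> \<longleftrightarrow> x = 0) \<and>
     (\<forall>x y. val (x * y) = val x + val y) \<and>
     (\<forall>x y. min (val x) (val y) \<le> val (x + y)) \<and>
     range val = {ereal (of_int k) | k. True} \<union> {\<infinity>}"

definition complete_valuation :: "('k::field \<Rightarrow> ereal) \<Rightarrow> bool" where
  "complete_valuation val \<longleftrightarrow>
     (\<forall>s :: nat \<Rightarrow> 'k.
        (\<forall>M::real. \<exists>N. \<forall>m\<ge>N. \<forall>n\<ge>N. ereal M \<le> val (s m - s n)) \<longrightarrow>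
        (\<exists>L. \<forall>M::real. \<exists>N. \<forall>n\<ge>N. ereal M \<le> val (s n - L)))"

definition convex_ereal_on :: "real set \<Rightarrow> (real \<Rightarrow> ereal) \<Rightarrow> bool" where
  "convex_ereal_on S f \<longleftrightarrow>
     (\<forall>x\<in>S. f x \<noteq> -\<infinity>) \<and>
     (\<forall>x\<in>S. \<forall>y\<in>S. \<forall>t::real. 0 \<le> t \<and> t \<le> 1 \<longrightarrow>
        f (t * x + (1 - t) * y) \<le> ereal t * f x + ereal (1 - t) * f y)"

definition epigraph_on :: "real \<Rightarrow> (real \<Rightarrow> ereal) \<Rightarrow> (real \<times> real) set" where
  "epigraph_on m f = {(x, y). 0 \<le> x \<and> x \<le> m \<and> f x \<le> ereal y}"

definition newton_fun :: "('k::field \<Rightarrow> ereal) \<Rightarrow> 'k poly \<Rightarrow> real \<Rightarrow> ereal" where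
  "newton_fun val Q x =
     (SUP f \<in> {f. convex_ereal_on {0..real (degree Q)} f \<and>
                 (\<forall>i\<le>degree Q. f (real i) \<le> val (coeff Q i))}. f x)"

definition newton_polygon :: "('k::field \<Rightarrow> ereal) \<Rightarrow> 'k poly \<Rightarrow> (real \<times> real) set" where
  "newton_polygon val Q = epigraph_on (real (degree Q)) (newton_fun val Q)"

definition piecewise_affine_ereal_on :: "real \<Rightarrow> (real \<Rightarrow> ereal) \<Rightarrow> bool" where
  "piecewise_affine_ereal_on m f \<longleftrightarrow>
     (\<exists>S. finite S \<and> 0 \<in> S \<and> m \<in> S \<and> S \<subseteq> {0..m} \<and>
        (\<forall>s\<in>S. \<forall>t\<in>S. s < t \<and> {s<..<t} \<inter> S = {} \<longrightarrow>
           (\<exists>a b. \<forall>x\<in>{s..t}. f x = ereal (a * x + b)) \<or>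
           (\<forall>x\<in>{s..<t}. f x = \<infinity>)))"

definition newton_function :: "nat \<Rightarrow> (real \<Rightarrow> ereal) \<Rightarrow> bool" where
  "newton_function m f \<longleftrightarrow>
     convex_ereal_on {0..real m} f \<and>
     piecewise_affine_ereal_on (real m) f \<and>
     f (real m) \<noteq> \<infinity> \<and>
     (\<forall>x y. (x, y) extreme_point_of epigraph_on (real m) f \<longrightarrow> x \<in> \<int>)"

definition phi_ext :: "('k::field \<Rightarrow> ereal) \<Rightarrow> 'k poly \<Rightarrow> nat \<Rightarrow> real \<Rightarrow> ereal" where
  "phi_ext val Papp d x =
     (let lam0 = newton_fun val Papp (real d) - newton_fun val Papp (real d - 1)
      in if x \<le> real d then newton_fun val Papp x
         else lam0 * ereal (x - real d) + newton_fun val Papp (real d))"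

end

theory Submission
  imports Defs
begin

text \<open>Since \<open>dP\<close> lies weakly above \<open>NP(Papp)\<close> and strictly above its vertices, \<open>P\<close> and \<open>Papp\<close>
  have the same Newton polygon. Writing \<open>P = A B\<close> and \<open>Papp = Aapp Bapp\<close> gives
  \<open>(A - Aapp) B \<equiv> dP\<close> modulo \<open>Aapp\<close>. The cofactor \<open>B\<close> behaves like a unit for the weights \<open>\<phi>\<close>:
  its constant term has valuation \<open>\<phi>(d)\<close> and all its other coefficients lie strictly above the line
  of slope \<open>\<lambda>\<^sub>0\<close> through it. Reduction modulo \<open>Aapp\<close> does not lower \<open>\<phi>\<close>-weighted valuations,
  because \<open>\<phi>\<close> has slopes at most \<open>\<lambda>\<^sub>0\<close> and is linear of slope \<open>\<lambda>\<^sub>0\<close> beyond \<open>d\<close>. Comparing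
  the coefficient of \<open>A - Aapp\<close> of least weighted valuation on both sides of the congruence
  yields the bound \<open>\<phi>(i) - \<phi>(d) + \<delta>\<close>.\<close>

locale valued_field =
  fixes val :: "'k::field \<Rightarrow> ereal"
  assumes discrete: "discrete_valuation val"
begin

lemma val_eq_infinity_iff: "val x = \<infinity> \<longleftrightarrow> x = 0"
  using discrete unfolding discrete_valuation_def by blast

lemma val_zero[simp]: "val 0 = \<infinity>" using val_eq_infinity_iff by simp

lemma val_mult: "val (x * y) = val x + val y"
  using discrete unfolding discrete_valuation_def by blast

lemma val_add_ge_min: "min (val x) (val y) \<le> val (x + y)"
  using discrete unfolding discrete_valuation_def by blast

lemma val_not_minf[simp]: "val x \<noteq> -\<infinity>"
proof
  assume "val x = -\<infinity>"
  moreover have "val x \<in> range val" by simp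
  ultimately show False using discrete unfolding discrete_valuation_def by auto
qed

lemma val_finite: "x \<noteq> 0 \<Longrightarrow> \<exists>r. val x = ereal r"
  using val_eq_infinity_iff[of x] val_not_minf[of x] by (cases "val x") auto

lemma val_one[simp]: "val 1 = 0"
proof -
  obtain r where r: "val 1 = ereal r" using val_finite[of 1] by auto
  have "val 1 = val 1 + val 1" using val_mult[of 1 1] by simp
  with r show ?thesis by (simp add: zero_ereal_def)
qed

lemma val_minus_one[simp]: "val (-1) = 0"
proof -
  obtain r where r: "val (-1) = ereal r" using val_finite[of "-1"] by auto
  have "0 = val (-1) + val (-1)" using val_mult[of "-1" "-1"] by simp
  with r show ?thesis by (simp add: zero_ereal_def)
qed

lemma val_uminus[simp]: "val (- x) = val x"
  using val_mult[of "-1" x] by simp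

lemma val_add_eq_left: assumes "val x < val y" shows "val (x + y) = val x"
proof -
  have 1: "val x \<le> val (x + y)" using val_add_ge_min[of x y] assms by simp
  have "min (val (x+y)) (val y) \<le> val ((x + y) + - y)" using val_add_ge_min[of "x+y" "-y"] by simp
  hence "min (val (x+y)) (val y) \<le> val x" by simp
  with assms have "val (x+y) \<le> val x" by (auto simp: min_def split: if_splits)
  with 1 show ?thesis by simp
qed

lemma val_add_ge: "c \<le> val x \<Longrightarrow> c \<le> val y \<Longrightarrow> c \<le> val (x + y)"
  using val_add_ge_min[of x y] by (meson min.boundedI order_trans)
lemma val_diff_ge: "c \<le> val x \<Longrightarrow> c \<le> val y \<Longrightarrow> c \<le> val (x - y)"
  using val_add_ge[of c x "-y"] by simp
lemma val_add_gt: "c < val x \<Longrightarrow> c < val y \<Longrightarrow> c < val (x + y)"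
  using val_add_ge_min[of x y] by (meson min_less_iff_conj order_less_le_trans)

lemma val_sum_gt: "finite I \<Longrightarrow> (\<And>i. i \<in> I \<Longrightarrow> ereal c < val (f i)) \<Longrightarrow> ereal c < val (sum f I)"
  by (induction I rule: finite_induct) (auto intro: val_add_gt)

lemma val_mult_ge: assumes "ereal a \<le> val x" "ereal b \<le> val y" shows "ereal (a + b) \<le> val (x * y)"
proof -
  have "ereal a + ereal b \<le> val x + val y" using assms by (intro add_mono) auto
  thus ?thesis by (simp add: val_mult)
qed

lemma val_mult_gt: assumes "ereal a < val x" "ereal b \<le> val y" shows "ereal (a + b) < val (x * y)"
proof (cases "y = 0")
  case True thus ?thesis by simp
next
  case False
  then obtain r where r: "val y = ereal r" using val_finite by blast
  show ?thesis using assms r by (cases "val x") (auto simp: val_mult)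
qed

lemma val_sum_eq_dominant:
  assumes "finite I" "i0 \<in> I" "\<And>i. i \<in> I - {i0} \<Longrightarrow> val (f i0) < val (f i)" "f i0 \<noteq> 0"
  shows "val (sum f I) = val (f i0)"
proof -
  obtain r where r: "val (f i0) = ereal r" using val_finite assms(4) by blast
  have "sum f I = f i0 + sum f (I - {i0})" using assms by (simp add: sum.remove)
  moreover have "val (f i0) < val (sum f (I - {i0}))" using assms unfolding r by (intro val_sum_gt) auto
  ultimately show ?thesis using val_add_eq_left by simp
qed

end

definition convex_minorants :: "('k::field \<Rightarrow> ereal) \<Rightarrow> 'k poly \<Rightarrow> (real \<Rightarrow> ereal) set" where
  "convex_minorants val Q = {f. convex_ereal_on {0..real (degree Q)} f \<and>
                 (\<forall>i\<le>degree Q. f (real i) \<le> val (coeff Q i))}"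

lemma newton_fun_eq_SUP: "newton_fun val Q x = (SUP f \<in> convex_minorants val Q. f x)"
  unfolding newton_fun_def convex_minorants_def by simp

lemma newton_fun_le_val_coeff: "i \<le> degree Q \<Longrightarrow> newton_fun val Q (real i) \<le> val (coeff Q i)"
  unfolding newton_fun_eq_SUP by (rule SUP_least) (auto simp: convex_minorants_def)

lemma convex_minorant_le_newton_fun: "convex_ereal_on {0..real (degree Q)} f \<Longrightarrow>
   (\<And>i. i\<le>degree Q \<Longrightarrow> f (real i) \<le> val (coeff Q i)) \<Longrightarrow> f x \<le> newton_fun val Q x"
  unfolding newton_fun_eq_SUP by (rule SUP_upper) (auto simp: convex_minorants_def)

lemma ereal_convex_comb_same: "0 \<le> t \<Longrightarrow> t \<le> 1 \<Longrightarrow> c \<noteq> -\<infinity> \<Longrightarrow>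
   ereal t * c + ereal (1 - t) * c = c"
proof (cases c)
  case (real r) assume "0 \<le> t" "t \<le> 1" thus ?thesis using real by (simp add: algebra_simps)
next
  case PInf assume "0 \<le> t" "t \<le> 1"
  thus ?thesis using PInf by (cases "t = 0"; cases "t = 1") auto
qed auto

lemma (in valued_field) convex_newton_fun: "convex_ereal_on {0..real (degree Q)} (newton_fun val Q)"
proof -
  define c where "c = Min ((\<lambda>i. val (coeff Q i)) ` {..degree Q})"
  have "c \<in> (\<lambda>i. val (coeff Q i)) ` {..degree Q}" unfolding c_def by (rule Min_in) auto
  hence cn: "c \<noteq> -\<infinity>" by auto
  have cmem: "(\<lambda>x. c) \<in> convex_minorants val Q"
    unfolding convex_minorants_def convex_ereal_on_def using cn
    by (auto simp: ereal_convex_comb_same c_def)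
  have lb: "c \<le> newton_fun val Q x" for x
    unfolding newton_fun_eq_SUP using cmem by (rule SUP_upper2) simp
  show ?thesis unfolding convex_ereal_on_def
  proof (intro conjI ballI allI impI)
    fix x assume "x \<in> {0..real (degree Q)}"
    show "newton_fun val Q x \<noteq> -\<infinity>" using lb[of x] cn by auto
  next
    fix x y and t :: real assume xy: "x \<in> {0..real (degree Q)}" "y \<in> {0..real (degree Q)}" and t: "0 \<le> t \<and> t \<le> 1"
    show "newton_fun val Q (t * x + (1 - t) * y)
          \<le> ereal t * newton_fun val Q x + ereal (1 - t) * newton_fun val Q y"
      unfolding newton_fun_eq_SUP[of _ _ "t * x + (1 - t) * y"]
    proof (rule SUP_least)
      fix f assume f: "f \<in> convex_minorants val Q"
      hence "f (t * x + (1 - t) * y) \<le> ereal t * f x + ereal (1 - t) * f y"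
        using xy t unfolding convex_minorants_def convex_ereal_on_def by auto
      also have "\<dots> \<le> ereal t * newton_fun val Q x + ereal (1 - t) * newton_fun val Q y"
        unfolding newton_fun_eq_SUP using f t
        by (intro add_mono ereal_mult_left_mono SUP_upper) auto
      finally show "f (t * x + (1 - t) * y)
          \<le> ereal t * newton_fun val Q x + ereal (1 - t) * newton_fun val Q y" .
    qed
  qed
qed

lemma (in valued_field) newton_fun_not_minf: "0 \<le> x \<Longrightarrow> x \<le> real (degree Q) \<Longrightarrow> newton_fun val Q x \<noteq> -\<infinity>"
  using convex_newton_fun[of Q] unfolding convex_ereal_on_def by auto

lemma convex_ereal_onD:
  assumes "convex_ereal_on S f" "x \<in> S" "y \<in> S" "f x = ereal a" "f y = ereal b" "0 \<le> t" "t \<le> 1"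
  shows "f (t * x + (1 - t) * y) \<le> ereal (t * a + (1 - t) * b)"
  using assms unfolding convex_ereal_on_def by (metis times_ereal.simps(1) plus_ereal.simps(1))

lemma convex_ereal_on_affine: "convex_ereal_on S (\<lambda>x. ereal (c + s * x))"
  unfolding convex_ereal_on_def by (auto simp: algebra_simps)

lemma extreme_point_of_two_supporting_lines:
  fixes S :: "(real \<times> real) set"
  assumes p: "(x0, y0) \<in> S" and s12: "s1 \<noteq> s2"
    and above: "\<And>s x y. s \<in> {s1, s2} \<Longrightarrow> (x, y) \<in> S \<Longrightarrow> y0 + s * (x - x0) \<le> y"
  shows "(x0, y0) extreme_point_of S"
  unfolding extreme_point_of_def
proof (intro conjI ballI notI)
  fix a b assume a: "a \<in> S" and b: "b \<in> S" and ab: "(x0, y0) \<in> open_segment a b"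
  then obtain u where u: "a \<noteq> b" "0 < u" "u < 1" "(x0, y0) = (1 - u) *\<^sub>R a + u *\<^sub>R b"
    unfolding in_segment by blast
  define g where "g s q = snd q - y0 - s * (fst q - x0)" for s q
  have g_nonneg: "0 \<le> g s q" if "s \<in> {s1, s2}" "q \<in> S" for s q
    using above[OF that(1), of "fst q" "snd q"] that(2) unfolding g_def by simp
  have "(1 - u) * g s a + u * g s b = 0" for s
  proof -
    have "(1 - u) * g s a + u * g s b
        = ((1 - u) * snd a + u * snd b) - y0 - s * (((1 - u) * fst a + u * fst b) - x0)"
      unfolding g_def by (simp add: algebra_simps)
    thus ?thesis using u(4) by (cases a, cases b) simp
  qed
  hence g_zero: "g s a = 0" "g s b = 0" if "s \<in> {s1, s2}" for s
    using g_nonneg[OF that a] g_nonneg[OF that b] u(2,3)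
    by (smt (verit) mult_pos_pos mult_nonneg_nonneg)+
  have "q = (x0, y0)" if "g s1 q = 0" "g s2 q = 0" for q
  proof -
    have "(s1 - s2) * (fst q - x0) = 0" using that unfolding g_def by (simp add: algebra_simps)
    hence "fst q = x0" using s12 by simp
    thus ?thesis using that unfolding g_def by (cases q) simp
  qed
  hence "a = (x0, y0)" "b = (x0, y0)" using g_zero by auto
  thus False using u(1) by simp
qed (rule p)

locale newton_poly = valued_field val for val :: "'k::field \<Rightarrow> ereal" +
  fixes Q :: "'k poly" and n :: nat
  assumes degree_Q: "degree Q = n" and lead_Q: "coeff Q n \<noteq> 0"
begin

definition NF :: "nat \<Rightarrow> ereal" where "NF k = newton_fun val Q (real k)"

lemma NF_le_val_coeff: "k \<le> n \<Longrightarrow> NF k \<le> val (coeff Q k)"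
  unfolding NF_def using newton_fun_le_val_coeff[of k Q val] degree_Q by simp

lemma NF_not_minf: "k \<le> n \<Longrightarrow> NF k \<noteq> -\<infinity>"
  unfolding NF_def using newton_fun_not_minf[of "real k" Q] degree_Q by simp

lemma NF_n_finite: "NF n \<noteq> \<infinity>"
proof -
  have "val (coeff Q n) \<noteq> \<infinity>" using lead_Q val_eq_infinity_iff by simp
  thus ?thesis using NF_le_val_coeff[of n] by auto
qed

lemma convex_newton_fun_Q: "convex_ereal_on {0..real n} (newton_fun val Q)"
  using convex_newton_fun[of Q] degree_Q by simp

lemma NF_convex_comb:
  assumes "i \<le> j" "j \<le> k" "k \<le> n" "i < k" "NF i = ereal a" "NF k = ereal b"
  shows "NF j \<le> ereal (((real k - real j) * a + (real j - real i) * b) / (real k - real i))"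
proof -
  define t where "t = (real k - real j) / (real k - real i)"
  have t: "0 \<le> t" "t \<le> 1" using assms unfolding t_def by (auto simp: field_simps)
  have tk: "t * (real k - real i) = real k - real j" unfolding t_def using assms by simp
  have "t * real i + (1 - t) * real k = real k - t * (real k - real i)" by (simp add: algebra_simps)
  hence "t * real i + (1 - t) * real k = real j" using tk by simp
  moreover have "t * a + (1 - t) * b = ((real k - real j) * a + (real j - real i) * b) / (real k - real i)"
  proof -
    have nz: "real k - real i \<noteq> 0" using assms by simp
    have "1 - t = (real j - real i) / (real k - real i)" unfolding t_def using nz
      by (simp add: field_simps)
    thus ?thesis unfolding t_def using nz by (simp add: add_divide_distrib)
  qed
  ultimately show ?thesis
    using convex_ereal_onD[OF convex_newton_fun_Q, of "real i" "real k" a b t] assms t unfolding NF_def by auto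
qed

lemma NF_finite_between:
  assumes "i \<le> j" "j \<le> k" "k \<le> n" "NF i \<noteq> \<infinity>" "NF k \<noteq> \<infinity>"
  shows "NF j \<noteq> \<infinity>"
proof (cases "i < k")
  case True
  obtain a where a: "NF i = ereal a" using assms NF_not_minf[of i] by (cases "NF i") auto
  obtain b where b: "NF k = ereal b" using assms NF_not_minf[of k] by (cases "NF k") auto
  show ?thesis using NF_convex_comb[OF assms(1-3) True a b] by auto
next
  case False
  hence "i = j" using assms by linarith
  thus ?thesis using assms by simp
qed

definition left_end :: nat where "left_end = (LEAST k. NF k \<noteq> \<infinity>)"

lemma left_end_le: "left_end \<le> n" unfolding left_end_def using NF_n_finite by (rule Least_le)

lemma NF_finite: "left_end \<le> k \<Longrightarrow> k \<le> n \<Longrightarrow> NF k \<noteq> \<infinity>"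
  using NF_finite_between[of left_end k n] NF_n_finite LeastI[of "\<lambda>k. NF k \<noteq> \<infinity>" n]
  unfolding left_end_def by auto

lemma NF_infinite: "k < left_end \<Longrightarrow> NF k = \<infinity>"
  unfolding left_end_def using not_less_Least by blast

lemma left_end_leI: "k \<le> n \<Longrightarrow> NF k \<noteq> \<infinity> \<Longrightarrow> left_end \<le> k"
  using NF_infinite by (meson not_less)

text \<open>Junk value: \<open>nf k = 0\<close> for \<open>k < left_end\<close>, where \<open>NF k = \<infinity>\<close>.\<close>

definition nf :: "nat \<Rightarrow> real" where "nf k = real_of_ereal (NF k)"

lemma NF_eq_nf: "left_end \<le> k \<Longrightarrow> k \<le> n \<Longrightarrow> NF k = ereal (nf k)"
  unfolding nf_def using NF_finite NF_not_minf by (cases "NF k") auto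

lemma coeff_eq_0_below_left_end: "k < left_end \<Longrightarrow> coeff Q k = 0"
proof -
  assume "k < left_end"
  hence "NF k = \<infinity>" by (rule NF_infinite)
  moreover have "k \<le> n" using \<open>k < left_end\<close> left_end_le by simp
  ultimately show ?thesis using NF_le_val_coeff[of k] val_eq_infinity_iff by auto
qed

lemma nf_le_val_coeff: "left_end \<le> k \<Longrightarrow> k \<le> n \<Longrightarrow> ereal (nf k) \<le> val (coeff Q k)"
  using NF_le_val_coeff NF_eq_nf by metis

lemma nf_convex_comb:
  assumes "left_end \<le> i" "i \<le> j" "j \<le> k" "k \<le> n" "i < k"
  shows "nf j \<le> ((real k - real j) * nf i + (real j - real i) * nf k) / (real k - real i)"
  using NF_convex_comb[OF assms(2-5) NF_eq_nf NF_eq_nf] NF_eq_nf[of j] assms by auto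

definition slope :: "nat \<Rightarrow> real" where "slope k = nf (Suc k) - nf k"

lemma slope_le_Suc: assumes "left_end \<le> k" "Suc (Suc k) \<le> n" shows "slope k \<le> slope (Suc k)"
proof -
  have "nf (Suc k) \<le> ((real (Suc (Suc k)) - real (Suc k)) * nf k + (real (Suc k) - real k) * nf (Suc (Suc k)))
        / (real (Suc (Suc k)) - real k)"
    using assms by (intro nf_convex_comb) auto
  thus ?thesis unfolding slope_def by (simp add: field_simps)
qed

lemma slope_mono: assumes "left_end \<le> a" "a \<le> b" "Suc b \<le> n" shows "slope a \<le> slope b"
  using assms
proof (induction b)
  case 0 thus ?case by simp
next
  case (Suc b)
  show ?case
  proof (cases "a = Suc b")
    case True thus ?thesis by simp
  next
    case False
    hence "slope a \<le> slope b" using Suc by auto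
    also have "slope b \<le> slope (Suc b)" using Suc False by (intro slope_le_Suc) auto
    finally show ?thesis .
  qed
qed

lemma nf_ge_right_tangent: assumes "left_end \<le> i" "i < n" "i \<le> j" "j \<le> n"
  shows "nf i + slope i * (real j - real i) \<le> nf j"
  using assms
proof (induction j)
  case 0 thus ?case by simp
next
  case (Suc j)
  show ?case
  proof (cases "i = Suc j")
    case True thus ?thesis by simp
  next
    case False
    hence ih: "nf i + slope i * (real j - real i) \<le> nf j" using Suc by auto
    have "slope i \<le> slope j" using Suc False by (intro slope_mono) auto
    hence "nf i + slope i * (real (Suc j) - real i) \<le> nf j + slope j" using ih by (simp add: algebra_simps)
    thus ?thesis unfolding slope_def by simp
  qed
qed

lemma nf_ge_left_tangent: assumes "left_end \<le> i" "i \<le> j" "0 < j" "j \<le> n"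
  shows "nf j - slope (j - 1) * (real j - real i) \<le> nf i"
  using assms
proof (induction "j - i" arbitrary: i)
  case 0 thus ?case by simp
next
  case (Suc m)
  have ij: "i < j" using Suc by simp
  show ?case
  proof (cases "Suc i = j")
    case True thus ?thesis unfolding slope_def using Suc by (auto simp: algebra_simps)
  next
    case False
    have ih: "nf j - slope (j - 1) * (real j - real (Suc i)) \<le> nf (Suc i)"
      using Suc(1)[of "Suc i"] Suc False by auto
    have "slope i \<le> slope (j - 1)" using Suc ij by (intro slope_mono) auto
    thus ?thesis using ih unfolding slope_def by (simp add: algebra_simps)
  qed
qed

text \<open>By \<open>vertex_extreme_point\<close> and \<open>extreme_point_imp_vertex\<close> these are exactly the abscissae of
  the extremal points of \<open>NP(Q)\<close>.\<close>

definition vertex :: "nat \<Rightarrow> bool" where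
  "vertex v \<longleftrightarrow> left_end \<le> v \<and> v \<le> n \<and> (v = left_end \<or> v = n \<or> slope (v - 1) < slope v)"

lemma supporting_line_margin:
  assumes v: "vertex v" and m: "0 \<le> m"
    and sl: "v = left_end \<or> slope (v - 1) + m \<le> s" and sr: "v = n \<or> s + m \<le> slope v"
    and k: "k \<le> n" "k \<noteq> v"
  shows "ereal (nf v + s * (real k - real v) + m) \<le> NF k"
proof -
  consider "k < left_end" | "left_end \<le> k" "v < k" | "left_end \<le> k" "k < v" using k by linarith
  thus ?thesis
  proof cases
    case 1 thus ?thesis using NF_infinite by simp
  next
    case 2
    have vn: "v < n" using 2 k by simp
    hence sv: "s + m \<le> slope v" using sr by simp
    have low: "nf v + slope v * (real k - real v) \<le> nf k"
      using v vn 2 k unfolding vertex_def by (intro nf_ge_right_tangent) auto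
    have d1: "1 \<le> real k - real v" using 2 by simp
    have "s * (real k - real v) + m \<le> s * (real k - real v) + m * (real k - real v)"
      using m d1 mult_left_mono[OF d1 m] by simp
    also have "\<dots> = (s + m) * (real k - real v)" by (simp add: algebra_simps)
    also have "\<dots> \<le> slope v * (real k - real v)" using sv d1 by (intro mult_right_mono) auto
    finally have "nf v + s * (real k - real v) + m \<le> nf k" using low by simp
    thus ?thesis using NF_eq_nf[of k] 2 k by simp
  next
    case 3
    have vj: "v \<noteq> left_end" using 3 by simp
    hence sv: "slope (v - 1) + m \<le> s" using sl by simp
    have low: "nf v - slope (v - 1) * (real v - real k) \<le> nf k"
      using v 3 unfolding vertex_def by (intro nf_ge_left_tangent) auto
    have d1: "1 \<le> real v - real k" using 3 by simp
    have "(slope (v - 1) + m) * (real v - real k) \<le> s * (real v - real k)"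
      using sv d1 by (intro mult_right_mono) auto
    moreover have "m \<le> m * (real v - real k)" using mult_left_mono[OF d1 m] by simp
    ultimately have "nf v + s * (real k - real v) + m \<le> nf v - slope (v - 1) * (real v - real k)"
      by (simp add: algebra_simps)
    thus ?thesis using low NF_eq_nf[of k] 3 k by simp
  qed
qed

lemma supporting_line:
  assumes v: "vertex v"
    and sl: "v = left_end \<or> slope (v - 1) \<le> s" and sr: "v = n \<or> s \<le> slope v"
    and k: "k \<le> n"
  shows "ereal (nf v + s * (real k - real v)) \<le> NF k"
proof (cases "k = v")
  case True thus ?thesis using v NF_eq_nf[of v] unfolding vertex_def by simp
next
  case False thus ?thesis using supporting_line_margin[OF v order_refl, of s k] sl sr k by simp
qed

lemma affine_le_newton_fun_val:
  assumes "\<And>k. k \<le> n \<Longrightarrow> ereal (c + s * real k) \<le> val (coeff Q k)"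
  shows "ereal (c + s * x) \<le> newton_fun val Q x"
proof -
  have "(\<lambda>x. ereal (c + s * x)) x \<le> newton_fun val Q x"
  proof (rule convex_minorant_le_newton_fun)
    show "convex_ereal_on {0..real (degree Q)} (\<lambda>x. ereal (c + s * x))" by (rule convex_ereal_on_affine)
    fix i assume "i \<le> degree Q"
    thus "ereal (c + s * real i) \<le> val (coeff Q i)" using assms(1)[of i] degree_Q by auto
  qed
  thus ?thesis by simp
qed

lemma affine_le_newton_fun:
  assumes "\<And>k. k \<le> n \<Longrightarrow> ereal (c + s * real k) \<le> NF k"
  shows "ereal (c + s * x) \<le> newton_fun val Q x"
  using assms NF_le_val_coeff order_trans by (intro affine_le_newton_fun_val) blast

lemma newton_polygon_iff: "(x, y) \<in> newton_polygon val Q \<longleftrightarrow> 0 \<le> x \<and> x \<le> real n \<and> newton_fun val Q x \<le> ereal y"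
  unfolding newton_polygon_def epigraph_on_def degree_Q by simp

lemma vertex_separating_slopes: assumes "vertex v"
  shows "\<exists>s m. 0 < m \<and> (v = left_end \<or> slope (v - 1) + m \<le> s) \<and> (v = n \<or> s + m \<le> slope v)"
proof (cases "v = left_end")
  case True
  show ?thesis
  proof (cases "v = n")
    case True thus ?thesis using \<open>v = left_end\<close> by - (rule exI[of _ 0], rule exI[of _ 1], auto)
  next
    case False thus ?thesis using True by - (rule exI[of _ "slope v - 1"], rule exI[of _ 1], auto)
  qed
next
  case False
  show ?thesis
  proof (cases "v = n")
    case True thus ?thesis using False by - (rule exI[of _ "slope (v - 1) + 1"], rule exI[of _ 1], auto)
  next
    case F2: False
    hence lt: "slope (v - 1) < slope v" using assms False unfolding vertex_def by auto
    show ?thesis using F2 False lt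
      by - (rule exI[of _ "(slope (v - 1) + slope v) / 2"], rule exI[of _ "(slope v - slope (v - 1)) / 2"], auto simp: field_simps)
  qed
qed

lemma val_coeff_vertex: assumes v: "vertex v" shows "val (coeff Q v) = ereal (nf v)"
proof (rule ccontr)
  assume ne: "val (coeff Q v) \<noteq> ereal (nf v)"
  have vn: "v \<le> n" "left_end \<le> v" using v unfolding vertex_def by auto
  have "ereal (nf v) \<le> val (coeff Q v)" using nf_le_val_coeff vn by simp
  hence lt: "ereal (nf v) < val (coeff Q v)" using ne by simp
  then obtain z where z: "ereal (nf v) < ereal z" "ereal z < val (coeff Q v)"
    using ereal_dense2 by blast
  obtain s m where sm: "0 < m" "v = left_end \<or> slope (v - 1) + m \<le> s" "v = n \<or> s + m \<le> slope v"
    using vertex_separating_slopes[OF v] by blast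
  define m0 where "m0 = min m (z - nf v)"
  have m0: "0 < m0" "m0 \<le> m" "m0 \<le> z - nf v" using sm z unfolding m0_def by auto
  have sl: "v = left_end \<or> slope (v - 1) + m0 \<le> s" "v = n \<or> s + m0 \<le> slope v" using sm m0 by auto
  have all: "ereal ((nf v - s * real v + m0) + s * real k) \<le> val (coeff Q k)" if k: "k \<le> n" for k
  proof (cases "k = v")
    case True
    have "ereal ((nf v - s * real v + m0) + s * real k) \<le> ereal z" using True m0 by simp
    also have "\<dots> \<le> val (coeff Q v)" using z by simp
    finally show ?thesis using True by simp
  next
    case False
    hence "ereal ((nf v - s * real v + m0) + s * real k) \<le> NF k"
      using supporting_line_margin[OF v _ sl, of k] m0 k by (simp add: algebra_simps)
    thus ?thesis using NF_le_val_coeff[OF k] by simp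
  qed
  have "ereal ((nf v - s * real v + m0) + s * real v) \<le> newton_fun val Q (real v)"
    by (rule affine_le_newton_fun_val[OF all])
  hence "ereal (nf v + m0) \<le> ereal (nf v)" using NF_eq_nf[of v] vn unfolding NF_def by simp
  thus False using m0 by simp
qed

lemma vertex_extreme_point:
  assumes v: "vertex v"
  shows "(real v, nf v) extreme_point_of newton_polygon val Q"
proof -
  obtain s m where sm: "0 < m" "v = left_end \<or> slope (v - 1) + m \<le> s" "v = n \<or> s + m \<le> slope v"
    using vertex_separating_slopes[OF v] by blast
  have vn: "left_end \<le> v" "v \<le> n" using v unfolding vertex_def by auto
  show ?thesis
  proof (rule extreme_point_of_two_supporting_lines)
    show "(real v, nf v) \<in> newton_polygon val Q"
      unfolding newton_polygon_iff using vn NF_eq_nf[of v] unfolding NF_def by auto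
    show "s - m \<noteq> s + m" using sm by simp
    fix s' x y assume s': "s' \<in> {s - m, s + m}" and xy: "(x, y) \<in> newton_polygon val Q"
    have "v = left_end \<or> slope (v - 1) \<le> s'" "v = n \<or> s' \<le> slope v" using sm s' by auto
    hence "ereal ((nf v - s' * real v) + s' * x) \<le> newton_fun val Q x"
      using supporting_line[OF v] by (intro affine_le_newton_fun) (auto simp: algebra_simps)
    also have "\<dots> \<le> ereal y" using xy unfolding newton_polygon_iff by simp
    finally show "nf v + s' * (x - real v) \<le> y" by (simp add: algebra_simps)
  qed
qed

lemma slope_const_between_vertices:
  assumes "left_end \<le> u" "\<And>k. u < k \<Longrightarrow> k < w \<Longrightarrow> \<not> vertex k" "w \<le> n"
  shows "u + j < w \<Longrightarrow> slope (u + j) = slope u"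
proof (induction j)
  case 0 thus ?case by simp
next
  case (Suc j)
  have ih: "slope (u + j) = slope u" using Suc by simp
  have k: "\<not> vertex (Suc (u + j))" using assms(2)[of "Suc (u + j)"] Suc by simp
  have le: "slope (u + j) \<le> slope (Suc (u + j))" using Suc assms by (intro slope_le_Suc) auto
  have "\<not> slope (u + j) < slope (Suc (u + j))" using k Suc assms unfolding vertex_def by auto
  thus ?case using le ih by simp
qed

lemma nf_linear_between_vertices:
  assumes "left_end \<le> u" "\<And>k. u < k \<Longrightarrow> k < w \<Longrightarrow> \<not> vertex k" "w \<le> n"
  shows "u + j \<le> w \<Longrightarrow> nf (u + j) = nf u + slope u * real j"
proof (induction j)
  case 0 thus ?case by simp
next
  case (Suc j)
  have "slope (u + j) = slope u" using slope_const_between_vertices[OF assms, of j] Suc by simp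
  thus ?case using Suc unfolding slope_def by (simp add: algebra_simps)
qed

lemma adjacent_vertices:
  assumes i: "left_end \<le> i" "i \<le> n" and nv: "\<not> vertex i"
  obtains u w where "vertex u" "vertex w" "u < i" "i < w" "w \<le> n"
    "\<And>k. u < k \<Longrightarrow> k < w \<Longrightarrow> \<not> vertex k"
proof -
  define U where "U = {k. vertex k \<and> k \<le> i}"
  define W where "W = {k. vertex k \<and> i \<le> k \<and> k \<le> n}"
  have j0U: "left_end \<in> U" unfolding U_def vertex_def using i left_end_le by auto
  have nW: "n \<in> W" unfolding W_def vertex_def using i left_end_le by auto
  have fU: "finite U" unfolding U_def by simp
  have fW: "finite W" unfolding W_def by simp
  define u where "u = Max U"
  define w where "w = Min W"
  have uU: "u \<in> U" unfolding u_def using fU j0U by (intro Max_in) auto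
  have wW: "w \<in> W" unfolding w_def using fW nW by (intro Min_in) auto
  have vu: "vertex u" "u \<le> i" using uU unfolding U_def by auto
  have vw: "vertex w" "i \<le> w" "w \<le> n" using wW unfolding W_def by auto
  have ui: "u < i" using vu nv by (cases "u = i") auto
  have iw: "i < w" using vw nv by (cases "w = i") auto
  have nov: "\<not> vertex k" if "u < k" "k < w" for k
  proof
    assume vk: "vertex k"
    show False
    proof (cases "k \<le> i")
      case True
      hence "k \<in> U" using vk unfolding U_def by simp
      hence "k \<le> u" unfolding u_def using fU by simp
      thus False using that by simp
    next
      case False
      hence "k \<in> W" using vk unfolding W_def vertex_def by simp
      hence "w \<le> k" unfolding w_def using fW by simp
      thus False using that by simp
    qed
  qed
  show thesis using that vu vw ui iw nov by blast
qed

lemma nf_interpolates_vertices: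
  assumes i: "left_end \<le> i" "i \<le> n"
  shows "\<exists>u w t. vertex u \<and> vertex w \<and> 0 \<le> t \<and> t \<le> 1 \<and> real i = t * real u + (1 - t) * real w
           \<and> nf i = t * nf u + (1 - t) * nf w"
proof (cases "vertex i")
  case True thus ?thesis by (intro exI[of _ i] exI[of _ i] exI[of _ 1]) auto
next
  case False
  then obtain u w where vu: "vertex u" and vw: "vertex w" "w \<le> n" and ui: "u < i" and iw: "i < w"
    and nov: "\<And>k. u < k \<Longrightarrow> k < w \<Longrightarrow> \<not> vertex k"
    using adjacent_vertices[OF i] by metis
  have j0u: "left_end \<le> u" using vu unfolding vertex_def by simp
  have hi: "nf i = nf u + slope u * real (i - u)"
    using nf_linear_between_vertices[OF j0u nov vw(2), of "i - u"] ui iw by simp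
  have hw: "nf w = nf u + slope u * real (w - u)"
    using nf_linear_between_vertices[OF j0u nov vw(2), of "w - u"] ui iw by simp
  define t where "t = (real w - real i) / (real w - real u)"
  have nz: "real w - real u \<noteq> 0" using ui iw by simp
  have t: "0 \<le> t" "t \<le> 1" unfolding t_def using ui iw by (auto simp: field_simps)
  have omt: "1 - t = (real i - real u) / (real w - real u)" unfolding t_def using nz by (simp add: field_simps)
  have e1: "real i = t * real u + (1 - t) * real w"
  proof -
    have "t * real u + (1 - t) * real w = real u + (1 - t) * (real w - real u)" by (simp add: algebra_simps)
    also have "\<dots> = real i" unfolding omt using nz by simp
    finally show ?thesis by simp
  qed
  have e2: "nf i = t * nf u + (1 - t) * nf w"
  proof -
    have hw': "nf w = nf u + slope u * (real w - real u)" using hw ui iw by (simp add: of_nat_diff)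
    have "t * nf u + (1 - t) * nf w = nf u + (1 - t) * (slope u * (real w - real u))"
      unfolding hw' by (simp add: algebra_simps)
    also have "\<dots> = nf u + slope u * (real i - real u)" unfolding omt using nz by simp
    finally show ?thesis using hi ui by (simp add: of_nat_diff)
  qed
  show ?thesis using vu vw t e1 e2 by blast
qed

lemma extreme_point_newton_polygon: assumes e: "(real d, y) extreme_point_of newton_polygon val Q"
  shows "left_end \<le> d \<and> d \<le> n \<and> y = nf d"
proof -
  have m: "(real d, y) \<in> newton_polygon val Q" using e unfolding extreme_point_of_def by blast
  hence dn: "d \<le> n" and le: "NF d \<le> ereal y" unfolding newton_polygon_iff NF_def by auto
  hence "NF d \<noteq> \<infinity>" by auto
  hence jd: "left_end \<le> d" using left_end_leI dn by blast
  have Hd: "NF d = ereal (nf d)" using NF_eq_nf jd dn by blast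
  have "y = nf d"
  proof (rule ccontr)
    assume "y \<noteq> nf d"
    hence lt: "nf d < y" using le Hd by simp
    have a: "(real d, nf d) \<in> newton_polygon val Q" unfolding newton_polygon_iff using Hd dn unfolding NF_def by simp
    have b: "(real d, 2 * y - nf d) \<in> newton_polygon val Q" unfolding newton_polygon_iff using Hd dn lt unfolding NF_def by simp
    have "(real d, y) \<in> open_segment (real d, nf d) (real d, 2 * y - nf d)"
      unfolding in_segment using lt by (intro conjI exI[of _ "1/2"]) (auto simp: algebra_simps)
    thus False using e a b unfolding extreme_point_of_def by blast
  qed
  thus ?thesis using jd dn by simp
qed

lemma slope_less_at_extreme_point: assumes e: "(real d, nf d) extreme_point_of newton_polygon val Q"
  and d: "left_end < d" "d < n"
  shows "slope (d - 1) < slope d"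
proof -
  have le: "slope (d - 1) \<le> slope d" using d by (intro slope_mono) auto
  show ?thesis
  proof (rule ccontr)
    assume "\<not> ?thesis"
    hence eq: "slope (d - 1) = slope d" using le by simp
    have a: "(real (d - 1), nf (d - 1)) \<in> newton_polygon val Q"
      unfolding newton_polygon_iff using NF_eq_nf[of "d - 1"] d unfolding NF_def by auto
    have b: "(real (d + 1), nf (d + 1)) \<in> newton_polygon val Q"
      unfolding newton_polygon_iff using NF_eq_nf[of "d + 1"] d unfolding NF_def by auto
    have s1: "slope (d - 1) = nf d - nf (d - 1)" unfolding slope_def using d by simp
    have s2: "slope d = nf (d + 1) - nf d" unfolding slope_def by simp
    have "(real d, nf d) \<in> open_segment (real (d - 1), nf (d - 1)) (real (d + 1), nf (d + 1))"
      unfolding in_segment using d eq s1 s2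
      by (intro conjI exI[of _ "1/2"]) (auto simp: field_simps of_nat_diff)
    thus False using e a b unfolding extreme_point_of_def by blast
  qed
qed

lemma convex_le_nf_via_vertices:
  assumes g: "convex_ereal_on {0..real n} g" and gv: "\<And>v. vertex v \<Longrightarrow> g (real v) \<le> ereal (nf v)"
    and i: "left_end \<le> i" "i \<le> n"
  shows "g (real i) \<le> ereal (nf i)"
proof -
  obtain u w t where uw: "vertex u" "vertex w" "0 \<le> t" "t \<le> 1" "real i = t * real u + (1 - t) * real w"
    "nf i = t * nf u + (1 - t) * nf w" using nf_interpolates_vertices[OF i] by blast
  have mem: "real u \<in> {0..real n}" "real w \<in> {0..real n}" using uw unfolding vertex_def by auto
  have "g (real i) \<le> ereal t * g (real u) + ereal (1 - t) * g (real w)"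
    using g mem uw unfolding convex_ereal_on_def by auto
  also have "\<dots> \<le> ereal t * ereal (nf u) + ereal (1 - t) * ereal (nf w)"
    using uw gv by (intro add_mono ereal_mult_left_mono) auto
  also have "\<dots> = ereal (nf i)" using uw by simp
  finally show ?thesis .
qed

lemma extreme_point_imp_vertex:
  assumes e: "(real v, y) extreme_point_of newton_polygon val Q"
  shows "vertex v"
proof -
  have v: "left_end \<le> v" "v \<le> n" "y = nf v" using extreme_point_newton_polygon[OF e] by auto
  show ?thesis
  proof (cases "left_end < v \<and> v < n")
    case True thus ?thesis using slope_less_at_extreme_point[of v] e v unfolding vertex_def by simp
  next
    case False thus ?thesis using v unfolding vertex_def by auto
  qed
qed

end

context valued_field begin

lemma val_coeff_mult_touching_index:
  fixes A B :: "'k poly"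
  assumes A: "degree A = d" "coeff A d = 1" "\<And>i. ereal (l * (real i - real d)) \<le> val (coeff A i)"
    and B_ge: "\<And>j. ereal (c + l * real j) \<le> val (coeff B j)"
    and B_gt: "\<And>j. js < j \<Longrightarrow> ereal (c + l * real j) < val (coeff B j)"
    and B_js: "val (coeff B js) = ereal (c + l * real js)"
  shows "val (coeff (A * B) (d + js)) = ereal (c + l * real js)"
proof -
  have "val (coeff (A * B) (d + js)) = val (coeff A d * coeff B (d + js - d))"
    unfolding coeff_mult
  proof (rule val_sum_eq_dominant)
    show "coeff A d * coeff B (d + js - d) \<noteq> 0" using A B_js by auto
    fix i assume i: "i \<in> {..d + js} - {d}"
    show "val (coeff A d * coeff B (d + js - d)) < val (coeff A i * coeff B (d + js - i))"
    proof (cases "d < i")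
      case True
      hence "coeff A i = 0" using A by (intro coeff_eq_0) auto
      thus ?thesis using A B_js by simp
    next
      case False
      hence id: "i < d" using i by auto
      have "ereal ((c + l * real (d + js - i)) + l * (real i - real d))
          < val (coeff B (d + js - i) * coeff A i)"
        using B_gt[of "d + js - i"] id A(3)[of i] by (intro val_mult_gt) auto
      moreover have "(c + l * real (d + js - i)) + l * (real i - real d) = c + l * real js"
        using id by (simp add: algebra_simps of_nat_diff)
      ultimately show ?thesis using A B_js by (simp add: mult.commute)
    qed
  qed auto
  thus ?thesis using A B_js by simp
qed

text \<open>If \<open>B\<close> had a coefficient below the line \<open>p + l (j + d)\<close>, the rightmost coefficient of \<open>B\<close>
  furthest below a line of slope \<open>l\<close> would produce a coefficient of \<open>A * B\<close> below \<open>p + l k\<close>.\<close>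

lemma cofactor_coeffs_ge:
  fixes A B :: "'k poly"
  assumes A: "degree A = d" "coeff A d = 1" "\<And>i. ereal (l * (real i - real d)) \<le> val (coeff A i)"
    and P: "\<And>k. ereal (p + l * real k) \<le> val (coeff (A * B) k)"
  shows "ereal (p + l * (real j + real d)) \<le> val (coeff B j)"
proof (rule ccontr)
  assume fail: "\<not> ereal (p + l * (real j + real d)) \<le> val (coeff B j)"
  define J where "J = {j. coeff B j \<noteq> 0}"
  define f where "f j = real_of_ereal (val (coeff B j)) - l * real j" for j
  have fin: "finite J" unfolding J_def by (rule finite_subset[of _ "{..degree B}"]) (auto intro: le_degree)
  have jJ: "j \<in> J" unfolding J_def using fail by auto
  have val_B: "val (coeff B i) = ereal (f i + l * real i)" if "i \<in> J" for i
    using val_finite[of "coeff B i"] that unfolding J_def f_def by auto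
  define m where "m = Min (f ` J)"
  have m_le: "m \<le> f i" if "i \<in> J" for i unfolding m_def using fin that by simp
  define Js where "Js = {i \<in> J. f i = m}"
  define js where "js = Max Js"
  have "m \<in> f ` J" unfolding m_def using fin jJ by (intro Min_in) auto
  hence "Js \<noteq> {}" unfolding Js_def by auto
  hence js: "js \<in> J" "f js = m" "\<And>i. i \<in> Js \<Longrightarrow> i \<le> js"
    using fin Max_in[of Js] unfolding js_def Js_def by auto
  have B_ge: "ereal (m + l * real i) \<le> val (coeff B i)" for i
    using m_le[of i] val_B[of i] unfolding J_def by (cases "coeff B i = 0") auto
  have B_gt: "ereal (m + l * real i) < val (coeff B i)" if "js < i" for i
  proof (cases "i \<in> J")
    case True
    hence "f i \<noteq> m" using js(3)[of i] that unfolding Js_def by auto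
    thus ?thesis using m_le[OF True] val_B[OF True] by simp
  qed (simp add: J_def)
  have "ereal (p + l * real (d + js)) \<le> ereal (m + l * real js)"
    using P[of "d + js"] val_coeff_mult_touching_index[OF A B_ge B_gt] val_B[OF js(1)] js(2) by simp
  moreover have "m < p + l * real d"
    using fail val_B[OF jJ] m_le[OF jJ] by (simp add: algebra_simps)
  ultimately show False by (simp add: algebra_simps)
qed

definition coeffs_ge :: "nat \<Rightarrow> (nat \<Rightarrow> real) \<Rightarrow> 'k poly \<Rightarrow> real \<Rightarrow> bool" where
  "coeffs_ge j0 \<psi> S t \<longleftrightarrow> (\<forall>k<j0. coeff S k = 0) \<and> (\<forall>k. ereal (\<psi> k + t) \<le> val (coeff S k))"

definition coeffs_gt :: "nat \<Rightarrow> (nat \<Rightarrow> real) \<Rightarrow> 'k poly \<Rightarrow> real \<Rightarrow> bool" where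
  "coeffs_gt j0 \<psi> S t \<longleftrightarrow> (\<forall>k<j0. coeff S k = 0) \<and> (\<forall>k. ereal (\<psi> k + t) < val (coeff S k))"

lemma coeffs_gt_imp_coeffs_ge_shift:
  assumes "coeffs_gt j0 \<psi> S t"
  obtains \<epsilon> where "0 < \<epsilon>" "coeffs_ge j0 \<psi> S (t + \<epsilon>)"
proof -
  define K where "K = {k. coeff S k \<noteq> 0}"
  define gap where "gap k = real_of_ereal (val (coeff S k)) - \<psi> k - t" for k
  define \<epsilon> where "\<epsilon> = Min (insert 1 (gap ` K))"
  have fin: "finite K" unfolding K_def
    by (rule finite_subset[of _ "{..degree S}"]) (auto intro: le_degree)
  have val_eq: "val (coeff S k) = ereal (gap k + \<psi> k + t)" if "k \<in> K" for k
    using val_finite[of "coeff S k"] that unfolding K_def gap_def by auto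
  have "0 < gap k" if "k \<in> K" for k
  proof -
    have "ereal (\<psi> k + t) < ereal (gap k + \<psi> k + t)"
      using assms val_eq[OF that] unfolding coeffs_gt_def by metis
    thus ?thesis by simp
  qed
  hence "0 < \<epsilon>" unfolding \<epsilon>_def using fin by simp
  moreover have "coeffs_ge j0 \<psi> S (t + \<epsilon>)" unfolding coeffs_ge_def
  proof (intro conjI allI impI)
    show "coeff S k = 0" if "k < j0" for k using assms that unfolding coeffs_gt_def by blast
  next
    fix k
    show "ereal (\<psi> k + (t + \<epsilon>)) \<le> val (coeff S k)"
    proof (cases "k \<in> K")
      case True
      hence "\<epsilon> \<le> gap k" unfolding \<epsilon>_def using fin by simp
      thus ?thesis using val_eq[OF True] by simp
    qed (simp add: K_def)
  qed
  ultimately show thesis by (rule that)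
qed

lemma coeffs_ge_shift_imp_coeffs_gt:
  assumes "0 < \<epsilon>" "coeffs_ge j0 \<psi> S (t + \<epsilon>)"
  shows "coeffs_gt j0 \<psi> S t"
  unfolding coeffs_gt_def
proof (intro conjI allI impI)
  show "coeff S k = 0" if "k < j0" for k using assms that unfolding coeffs_ge_def by blast
next
  fix k
  have "ereal (\<psi> k + t) < ereal (\<psi> k + (t + \<epsilon>))" using assms(1) by simp
  also have "\<dots> \<le> val (coeff S k)" using assms(2) unfolding coeffs_ge_def by blast
  finally show "ereal (\<psi> k + t) < val (coeff S k)" .
qed

end

locale weighted_division = valued_field val for val :: "'k::field \<Rightarrow> ereal" +
  fixes D :: "'k poly" and d j0 :: nat and \<psi> :: "nat \<Rightarrow> real" and l :: real
  assumes degree_D: "degree D = d" and monic_D: "coeff D d = 1" and d_pos: "0 < d"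
    and coeffs_D: "coeffs_ge j0 \<psi> D (- \<psi> d)"
    and psi_slope: "\<And>i j. j0 \<le> i \<Longrightarrow> \<psi> (i + j) \<le> \<psi> i + l * real j"
    and psi_linear: "\<And>k. d \<le> k \<Longrightarrow> \<psi> k = \<psi> d + l * (real k - real d)"
begin

lemma degree_sub_lead_monom_mult_less:
  assumes "degree S = k" "d \<le> k"
  shows "degree (S - monom (coeff S k) (k - d) * D) < k"
proof -
  have "degree (S - monom (coeff S k) (k - d) * D) \<le> k - 1"
  proof (rule degree_le, intro allI impI)
    fix m assume m: "k - 1 < m"
    show "coeff (S - monom (coeff S k) (k - d) * D) m = 0"
    proof (cases "m = k")
      case True
      have "k - (k - d) = d" using assms by simp
      thus ?thesis using monic_D True by (simp add: coeff_monom_mult)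
    next
      case False
      hence mk: "k < m" using m d_pos assms by simp
      have "coeff S m = 0" using mk assms by (simp add: coeff_eq_0)
      moreover have "coeff D (m - (k - d)) = 0" using mk assms degree_D by (intro coeff_eq_0) auto
      ultimately show ?thesis by (simp add: coeff_monom_mult)
    qed
  qed
  thus ?thesis using assms d_pos by simp
qed

lemma coeffs_ge_sub_monom_mult:
  assumes S: "coeffs_ge j0 \<psi> S t" and k: "d \<le> k"
  shows "coeffs_ge j0 \<psi> (S - monom (coeff S k) (k - d) * D) t"
  unfolding coeffs_ge_def
proof (intro conjI allI impI)
  have D_zero: "coeff D j = 0" if "j < j0" for j using coeffs_D that unfolding coeffs_ge_def by auto
  have co: "coeff (S - monom (coeff S k) (k - d) * D) m =
     coeff S m - (if m < k - d then 0 else coeff S k * coeff D (m - (k - d)))" for m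
    by (simp add: coeff_monom_mult)
  {
    fix m assume "m < j0"
    thus "coeff (S - monom (coeff S k) (k - d) * D) m = 0"
      using S D_zero[of "m - (k - d)"] unfolding co coeffs_ge_def by auto
  }
  fix m
  have S_m: "ereal (\<psi> m + t) \<le> val (coeff S m)" using S unfolding coeffs_ge_def by auto
  have "ereal (\<psi> m + t) \<le> val (coeff S k * coeff D (m - (k - d)))"
    if m: "\<not> m < k - d" "j0 \<le> m - (k - d)"
  proof -
    have "\<psi> m = \<psi> ((m - (k - d)) + (k - d))" using m by simp
    also have "\<dots> \<le> \<psi> (m - (k - d)) + l * real (k - d)" using psi_slope m by blast
    also have "\<dots> = \<psi> k + (\<psi> (m - (k - d)) - \<psi> d)" using psi_linear[OF k] k by (simp add: of_nat_diff)
    finally have "ereal (\<psi> m + t) \<le> ereal ((\<psi> k + t) + (\<psi> (m - (k - d)) - \<psi> d))" by simp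
    also have "\<dots> \<le> val (coeff S k * coeff D (m - (k - d)))"
      using S coeffs_D unfolding coeffs_ge_def by (intro val_mult_ge) auto
    finally show ?thesis .
  qed
  hence "ereal (\<psi> m + t) \<le> val (if m < k - d then 0 else coeff S k * coeff D (m - (k - d)))"
    using D_zero[of "m - (k - d)"] by (cases "j0 \<le> m - (k - d)") auto
  thus "ereal (\<psi> m + t) \<le> val (coeff (S - monom (coeff S k) (k - d) * D) m)"
    unfolding co using S_m by (intro val_diff_ge)
qed

lemma coeffs_ge_mod: "coeffs_ge j0 \<psi> S t \<Longrightarrow> coeffs_ge j0 \<psi> (S mod D) t"
proof (induction "degree S" arbitrary: S rule: less_induct)
  case less
  show ?case
  proof (cases "degree S < d")
    case True
    hence "S mod D = S" using degree_D by (intro mod_poly_less) auto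
    thus ?thesis using less.prems by simp
  next
    case False
    define S' where "S' = S - monom (coeff S (degree S)) (degree S - d) * D"
    have "degree S' < degree S"
      unfolding S'_def using False by (intro degree_sub_lead_monom_mult_less) auto
    moreover have "coeffs_ge j0 \<psi> S' t"
      unfolding S'_def using less.prems False by (intro coeffs_ge_sub_monom_mult) auto
    moreover have "S mod D = S' mod D" unfolding S'_def by (metis mod_mult_self1 diff_add_cancel)
    ultimately show ?thesis using less.hyps by metis
  qed
qed

lemma coeffs_gt_mod: "coeffs_gt j0 \<psi> S t \<Longrightarrow> coeffs_gt j0 \<psi> (S mod D) t"
  by (metis coeffs_gt_imp_coeffs_ge_shift coeffs_ge_mod coeffs_ge_shift_imp_coeffs_gt)

lemma coeffs_gt_mult:
  assumes E: "coeffs_ge j0 \<psi> E s"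
    and B: "coeff B 0 = 0" "\<And>j. 1 \<le> j \<Longrightarrow> ereal (\<beta> + l * real j) < val (coeff B j)"
  shows "coeffs_gt j0 \<psi> (E * B) (s + \<beta>)"
  unfolding coeffs_gt_def
proof (intro conjI allI impI)
  fix k assume "k < j0"
  thus "coeff (E * B) k = 0" unfolding coeff_mult using E unfolding coeffs_ge_def
    by (intro sum.neutral) auto
next
  fix k
  show "ereal (\<psi> k + (s + \<beta>)) < val (coeff (E * B) k)" unfolding coeff_mult
  proof (rule val_sum_gt)
    fix i assume i: "i \<in> {..k}"
    show "ereal (\<psi> k + (s + \<beta>)) < val (coeff E i * coeff B (k - i))"
    proof (cases "k - i = 0 \<or> coeff E i = 0")
      case True thus ?thesis using B(1) by auto
    next
      case False
      hence j1: "1 \<le> k - i" and ei: "coeff E i \<noteq> 0" by auto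
      have "j0 \<le> i" using E ei unfolding coeffs_ge_def by (meson not_less)
      hence "\<psi> k \<le> \<psi> i + l * real (k - i)" using psi_slope[of i "k - i"] i by simp
      hence "ereal (\<psi> k + (s + \<beta>)) \<le> ereal ((\<beta> + l * real (k - i)) + (\<psi> i + s))" by simp
      also have "\<dots> < val (coeff B (k - i) * coeff E i)"
        using B(2)[OF j1] E unfolding coeffs_ge_def by (intro val_mult_gt) auto
      finally show ?thesis by (simp add: mult.commute)
    qed
  qed simp
qed

text \<open>The coefficient of \<open>E\<close> of smallest weighted valuation survives in \<open>E * B mod D\<close>:
  the constant term of \<open>B\<close> reproduces it and all other contributions are strictly larger.\<close>

lemma coeffs_ge_of_mult_mod_eq:
  assumes E: "degree E < d" "\<And>k. k < j0 \<Longrightarrow> coeff E k = 0"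
    and B: "val (coeff B 0) = ereal \<beta>" "\<And>j. 1 \<le> j \<Longrightarrow> ereal (\<beta> + l * real j) < val (coeff B j)"
    and eq: "(E * B) mod D = S mod D" and S: "coeffs_ge j0 \<psi> S \<delta>"
  shows "ereal (\<psi> i + \<delta> - \<beta>) \<le> val (coeff E i)"
proof (cases "E = 0")
  case True thus ?thesis by simp
next
  case False
  define I where "I = {i. i \<le> degree E \<and> coeff E i \<noteq> 0}"
  define f where "f i = real_of_ereal (val (coeff E i)) - \<psi> i" for i
  define t0 where "t0 = Min (f ` I)"
  have fin: "finite I" unfolding I_def by simp
  have "I \<noteq> {}" unfolding I_def using False leading_coeff_0_iff by blast
  hence "t0 \<in> f ` I" unfolding t0_def using fin by (intro Min_in) auto
  then obtain i0 where i0: "coeff E i0 \<noteq> 0" "f i0 = t0" unfolding I_def by auto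
  have val_E: "val (coeff E i) = ereal (f i + \<psi> i)" if "coeff E i \<noteq> 0" for i
    using val_finite[OF that] unfolding f_def by auto
  have E_t0: "coeffs_ge j0 \<psi> E t0" unfolding coeffs_ge_def
  proof (intro conjI allI impI)
    fix i
    show "ereal (\<psi> i + t0) \<le> val (coeff E i)"
    proof (cases "coeff E i = 0")
      case False
      hence "i \<in> I" unfolding I_def using le_degree by blast
      hence "t0 \<le> f i" unfolding t0_def using fin by simp
      thus ?thesis using val_E[OF False] by simp
    qed simp
  qed (use E in auto)
  define b0 where "b0 = coeff B 0"
  have EB_mod: "(E * B) mod D = smult b0 E + (E * (B - [:b0:])) mod D"
  proof -
    have "smult b0 E mod D = smult b0 E"
      using E degree_D by (intro mod_poly_less) (auto intro: le_less_trans[OF degree_smult_le])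
    moreover have "E * B = smult b0 E + E * (B - [:b0:])" by (simp add: algebra_simps)
    ultimately show ?thesis by (metis poly_mod_add_left)
  qed
  have "coeff (B - [:b0:]) j = coeff B j" if "1 \<le> j" for j using that by (cases j) auto
  hence "coeffs_gt j0 \<psi> (E * (B - [:b0:])) (t0 + \<beta>)"
    using E_t0 B(2) by (intro coeffs_gt_mult) (simp_all add: b0_def)
  hence R: "coeffs_gt j0 \<psi> ((E * (B - [:b0:])) mod D) (t0 + \<beta>)" by (rule coeffs_gt_mod)
  have v1: "val (b0 * coeff E i0) = ereal (\<psi> i0 + t0 + \<beta>)"
    using val_E[OF i0(1)] B(1) i0 unfolding b0_def by (simp add: val_mult algebra_simps)
  have "val (coeff (S mod D) i0) = val (b0 * coeff E i0 + coeff ((E * (B - [:b0:])) mod D) i0)"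
    using eq EB_mod by (metis coeff_add coeff_smult)
  also have "\<dots> = ereal (\<psi> i0 + t0 + \<beta>)"
    using R v1 val_add_eq_left unfolding coeffs_gt_def by (simp add: algebra_simps)
  finally have "ereal (\<psi> i0 + \<delta>) \<le> ereal (\<psi> i0 + t0 + \<beta>)"
    using coeffs_ge_mod[OF S] unfolding coeffs_ge_def by metis
  hence "ereal (\<psi> i + \<delta> - \<beta>) \<le> ereal (\<psi> i + t0)" by simp
  also have "\<dots> \<le> val (coeff E i)" using E_t0 unfolding coeffs_ge_def by blast
  finally show ?thesis .
qed

end

locale newton_perturbation = newton_poly val Papp n
  for val :: "'k::field \<Rightarrow> ereal" and Papp :: "'k poly" and n :: nat +
  fixes d :: nat and dP :: "'k poly" and phiP :: "real \<Rightarrow> ereal"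
  assumes monic: "coeff Papp n = 1"
    and d_pos: "0 < d" and d_less: "d < n"
    and extreme_d: "\<exists>y. (real d, y) extreme_point_of newton_polygon val Papp"
    and low_coeff: "\<exists>j<d. coeff Papp j \<noteq> 0"
    and phiP_newton: "newton_function (n - 1) phiP"
    and nondeg_le: "\<forall>x\<in>{0..real (n - 1)}. newton_fun val Papp x \<le> phiP x"
    and nondeg_less: "\<forall>x y. (x, y) extreme_point_of newton_polygon val Papp \<and> x \<le> real (n - 1)
                        \<longrightarrow> ereal y < phiP x"
    and delta_pos: "0 < (INF x \<in> {x\<in>{0..real (n - 1)}. phi_ext val Papp d x \<noteq> \<infinity>}.
                          phiP x - phi_ext val Papp d x)"
    and degree_dP: "degree dP \<le> n - 1"
    and val_dP: "\<forall>i\<le>n - 1. phiP (real i) \<le> val (coeff dP i)"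
begin

definition lambda0 :: real where "lambda0 = slope (d - 1)"
definition lambda1 :: real where "lambda1 = slope d"

text \<open>\<open>psi\<close> is \<open>\<phi>\<close> at the integers \<open>\<ge> left_end\<close> (\<open>phi_ext_nat\<close>), \<open>first_factor\<close> describes the
  paper's \<open>A^(1)\<close> and \<open>A^(1)_app\<close>.\<close>

definition psi :: "nat \<Rightarrow> real" where
  "psi k = (if k \<le> d then nf k else nf d + lambda0 * (real k - real d))"

definition delta :: ereal where
  "delta = (INF x \<in> {x\<in>{0..real (n - 1)}. phi_ext val Papp d x \<noteq> \<infinity>}. phiP x - phi_ext val Papp d x)"

definition first_factor :: "'k poly \<Rightarrow> bool" where
  "first_factor X \<longleftrightarrow> lead_coeff X = 1 \<and> degree X = d \<and>
     (\<forall>x\<in>{0..real d}. newton_fun val X x = newton_fun val Papp x - newton_fun val Papp (real d))"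

lemma coeff_dP_eq_0: "n - 1 < k \<Longrightarrow> coeff dP k = 0"
  using degree_dP by (intro coeff_eq_0) auto

lemma degree_P: "degree (Papp + dP) = n"
  using degree_dP degree_Q d_less by (subst degree_add_eq_left) auto

lemma coeff_P_n: "coeff (Papp + dP) n = 1"
  using monic coeff_dP_eq_0[of n] d_less by simp

lemma d_vertex: "vertex d"
  using extreme_d extreme_point_imp_vertex by blast

lemma left_end_less_d: "left_end < d"
proof -
  obtain j where j: "j < d" "coeff Papp j \<noteq> 0" using low_coeff by blast
  have "NF j \<noteq> \<infinity>" using NF_le_val_coeff[of j] j d_less val_eq_infinity_iff[of "coeff Papp j"] by auto
  thus ?thesis using left_end_leI[of j] j d_less by simp
qed

lemma lambda0_less_lambda1: "lambda0 < lambda1"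
  using d_vertex left_end_less_d d_less unfolding vertex_def lambda0_def lambda1_def by simp

lemma nf_d_le: "left_end \<le> i \<Longrightarrow> i \<le> d \<Longrightarrow> nf d \<le> nf i + lambda0 * (real d - real i)"
  unfolding lambda0_def using nf_ge_left_tangent[of i d] d_pos d_less by simp

lemma nf_ge_tangent_d:
  assumes "left_end \<le> k" "k \<le> n"
  shows "nf d + lambda1 * (real k - real d) \<le> nf k"
proof (cases "d \<le> k")
  case True thus ?thesis unfolding lambda1_def using nf_ge_right_tangent[of d k] left_end_less_d d_less assms by simp
next
  case False
  have "0 \<le> (lambda1 - lambda0) * (real d - real k)" using lambda0_less_lambda1 False by simp
  thus ?thesis using nf_d_le[of k] assms False by (simp add: algebra_simps)
qed

lemma val_coeff_P_vertex:
  assumes v: "vertex v"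
  shows "val (coeff (Papp + dP) v) = ereal (nf v)"
proof (cases "v = n")
  case True thus ?thesis using coeff_P_n monic val_coeff_vertex[OF v] by simp
next
  case False
  hence v1: "v \<le> n - 1" using v unfolding vertex_def by auto
  have "val (coeff Papp v) = ereal (nf v)" by (rule val_coeff_vertex[OF v])
  also have "\<dots> < phiP (real v)"
    using nondeg_less vertex_extreme_point[OF v] v1 by (auto simp: of_nat_diff)
  also have "\<dots> \<le> val (coeff dP v)" using val_dP v1 by simp
  finally show ?thesis using val_add_eq_left val_coeff_vertex[OF v] by simp
qed

lemma NF_le_val_coeff_P: "k \<le> n \<Longrightarrow> NF k \<le> val (coeff (Papp + dP) k)"
proof (cases "k = n")
  case True thus ?thesis using NF_le_val_coeff[of n] coeff_P_n monic by simp
next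
  case False
  assume k: "k \<le> n"
  hence k1: "k \<le> n - 1" using False by simp
  have "NF k \<le> phiP (real k)" using nondeg_le k1 unfolding NF_def by (auto simp: of_nat_diff)
  also have "\<dots> \<le> val (coeff dP k)" using val_dP k1 by simp
  finally show ?thesis using NF_le_val_coeff[OF k] by (simp add: val_add_ge)
qed

text \<open>\<open>NF(Papp)\<close> is a convex minorant of the coefficients of \<open>P\<close>; conversely, \<open>NF(P)\<close> lies
  below the vertices of \<open>NP(Papp)\<close>, whose valuations are not changed by \<open>dP\<close>.\<close>

lemma newton_fun_P_eq: "\<forall>x\<in>{0..real n}. newton_fun val (Papp + dP) x = newton_fun val Papp x"
proof
  fix x assume x: "x \<in> {0..real n}"
  have convP: "convex_ereal_on {0..real n} (newton_fun val (Papp + dP))"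
    using convex_newton_fun[of "Papp + dP"] degree_P by simp
  have "newton_fun val Papp x \<le> newton_fun val (Papp + dP) x"
  proof (rule convex_minorant_le_newton_fun)
    show "convex_ereal_on {0..real (degree (Papp + dP))} (newton_fun val Papp)"
      using convex_newton_fun_Q degree_P by simp
  qed (use NF_le_val_coeff_P degree_P in \<open>auto simp: NF_def\<close>)
  moreover have "newton_fun val (Papp + dP) x \<le> newton_fun val Papp x"
  proof (rule convex_minorant_le_newton_fun)
    show "convex_ereal_on {0..real (degree Papp)} (newton_fun val (Papp + dP))"
      using convP degree_Q by simp
    fix i assume i: "i \<le> degree Papp"
    show "newton_fun val (Papp + dP) (real i) \<le> val (coeff Papp i)"
    proof (cases "i < left_end")
      case True thus ?thesis using coeff_eq_0_below_left_end by simp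
    next
      case False
      have "newton_fun val (Papp + dP) (real i) \<le> ereal (nf i)"
      proof (rule convex_le_nf_via_vertices[OF convP])
        fix v assume v: "vertex v"
        hence "v \<le> n" unfolding vertex_def by simp
        thus "newton_fun val (Papp + dP) (real v) \<le> ereal (nf v)"
          using newton_fun_le_val_coeff[of v "Papp + dP" val] val_coeff_P_vertex[OF v] degree_P
          by simp
      qed (use False i degree_Q in auto)
      also have "\<dots> \<le> val (coeff Papp i)" using nf_le_val_coeff False i degree_Q by simp
      finally show ?thesis .
    qed
  qed
  ultimately show "newton_fun val (Papp + dP) x = newton_fun val Papp x" by simp
qed

lemma psi_d: "psi d = nf d"
  unfolding psi_def by simp

lemma psi_slope: "left_end \<le> i \<Longrightarrow> psi (i + j) \<le> psi i + lambda0 * real j"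
proof -
  assume i: "left_end \<le> i"
  consider "i + j \<le> d" "j \<noteq> 0" | "j = 0" | "\<not> i + j \<le> d" "i \<le> d" | "\<not> i \<le> d" by linarith
  thus ?thesis
  proof cases
    case 1
    have "nf (i + j) - slope (i + j - 1) * (real (i + j) - real i) \<le> nf i"
      using nf_ge_left_tangent[of i "i + j"] i 1 d_less by simp
    moreover have "slope (i + j - 1) \<le> lambda0" unfolding lambda0_def
      using slope_mono[of "i + j - 1" "d - 1"] i 1 d_less by simp
    ultimately have "nf (i + j) \<le> nf i + lambda0 * real j"
      by (smt (verit) mult_right_mono of_nat_0_le_iff of_nat_add add_diff_cancel_left')
    thus ?thesis using 1 unfolding psi_def by simp
  next
    case 3
    have "nf d + lambda0 * (real (i + j) - real d)
        \<le> nf i + lambda0 * (real d - real i) + lambda0 * (real (i + j) - real d)"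
      using nf_d_le[OF i 3(2)] by simp
    thus ?thesis using 3 unfolding psi_def by (simp add: algebra_simps)
  qed (auto simp: psi_def algebra_simps)
qed

lemma psi_linear: "d \<le> k \<Longrightarrow> psi k = psi d + lambda0 * (real k - real d)"
  unfolding psi_def by auto

lemma phi_ext_nat:
  assumes "k \<le> n"
  shows "phi_ext val Papp d (real k) = (if k < left_end then \<infinity> else ereal (psi k))"
proof (cases "k \<le> d")
  case True
  thus ?thesis using NF_infinite[of k] NF_eq_nf[of k] assms unfolding phi_ext_def NF_def psi_def by auto
next
  case False
  have "newton_fun val Papp (real d - 1) = ereal (nf (d - 1))"
    using NF_eq_nf[of "d - 1"] left_end_less_d d_less d_pos unfolding NF_def by (simp add: of_nat_diff)
  moreover have "newton_fun val Papp (real d) = ereal (nf d)"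
    using NF_eq_nf[of d] left_end_less_d d_less unfolding NF_def by simp
  moreover have "nf d - nf (d - 1) = lambda0" unfolding lambda0_def slope_def using d_pos by simp
  ultimately show ?thesis using False left_end_less_d unfolding phi_ext_def psi_def Let_def
    by (simp add: algebra_simps)
qed

lemma delta_le: "left_end \<le> k \<Longrightarrow> k \<le> n - 1 \<Longrightarrow> delta \<le> phiP (real k) - ereal (psi k)"
  using phi_ext_nat[of k] unfolding delta_def by (intro INF_lower2[of "real k"]) auto

definition deltar :: real where "deltar = real_of_ereal delta"

lemma delta_eq: "delta = ereal deltar" and deltar_pos: "0 < deltar"
proof -
  have "delta \<le> phiP (real (n - 1)) - ereal (psi (n - 1))"
    by (rule delta_le) (use left_end_less_d d_less in auto)
  moreover have "phiP (real (n - 1)) \<noteq> \<infinity>" using phiP_newton unfolding newton_function_def by simp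
  ultimately have "delta \<noteq> \<infinity>" by (cases "phiP (real (n - 1))") auto
  moreover have "0 < delta" using delta_pos unfolding delta_def .
  ultimately show "delta = ereal deltar" "0 < deltar" unfolding deltar_def by (cases delta; auto)+
qed

lemma coeffs_ge_dP: "coeffs_ge left_end psi dP deltar"
  unfolding coeffs_ge_def
proof (intro conjI allI impI)
  have below: "coeff dP k = 0" if k: "k < left_end" for k
  proof -
    have kn: "k \<le> n - 1" using k left_end_less_d d_less by simp
    have "newton_fun val Papp (real k) = \<infinity>" using NF_infinite[OF k] unfolding NF_def .
    hence "\<infinity> \<le> phiP (real k)"
      using nondeg_le kn by (metis atLeastAtMost_iff of_nat_0_le_iff of_nat_mono)
    also have "\<dots> \<le> val (coeff dP k)" using val_dP kn by simp
    finally show ?thesis using val_eq_infinity_iff by simp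
  qed
  thus "k < left_end \<Longrightarrow> coeff dP k = 0" for k .
  fix k
  show "ereal (psi k + deltar) \<le> val (coeff dP k)"
  proof (cases "n - 1 < k \<or> k < left_end")
    case True thus ?thesis using coeff_dP_eq_0 below by auto
  next
    case False
    have "phiP (real k) \<noteq> -\<infinity>"
      using phiP_newton False unfolding newton_function_def convex_ereal_on_def by (auto simp: of_nat_diff)
    hence "ereal (psi k + deltar) \<le> phiP (real k)"
      using delta_le[of k] False delta_eq by (cases "phiP (real k)") auto
    also have "\<dots> \<le> val (coeff dP k)" using val_dP False by simp
    finally show ?thesis .
  qed
qed

lemma first_factor_val_coeff:
  assumes X: "first_factor X" and i: "left_end \<le> i" "i \<le> d"
  shows "ereal (nf i - nf d) \<le> val (coeff X i)"
proof -
  have "newton_fun val X (real i) = ereal (nf i) - ereal (nf d)"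
    using X i NF_eq_nf[of i] NF_eq_nf[of d] left_end_less_d d_less
    unfolding first_factor_def NF_def by simp
  thus ?thesis using newton_fun_le_val_coeff[of i X val] X i unfolding first_factor_def by simp
qed

lemma first_factor_coeff_eq_0:
  assumes X: "first_factor X" and i: "i < left_end"
  shows "coeff X i = 0"
proof -
  have "newton_fun val X (real i) = \<infinity>"
    using X i NF_infinite[of i] NF_eq_nf[of d] left_end_less_d d_less
    unfolding first_factor_def NF_def by simp
  thus ?thesis using newton_fun_le_val_coeff[of i X val] X i left_end_less_d val_eq_infinity_iff
    unfolding first_factor_def by simp
qed

lemma first_factor_coeffs_ge_psi: "first_factor X \<Longrightarrow> coeffs_ge left_end psi X (- psi d)"
  unfolding coeffs_ge_def
proof (intro conjI allI impI)
  assume X: "first_factor X"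
  thus "k < left_end \<Longrightarrow> coeff X k = 0" for k by (rule first_factor_coeff_eq_0)
  fix k
  show "ereal (psi k + - psi d) \<le> val (coeff X k)"
  proof (cases "d < k \<or> k < left_end")
    case True thus ?thesis using X first_factor_coeff_eq_0 unfolding first_factor_def
      by (auto simp: coeff_eq_0)
  next
    case False thus ?thesis using first_factor_val_coeff[OF X] unfolding psi_def by simp
  qed
qed

lemma first_factor_coeffs_ge_line:
  assumes X: "first_factor X"
  shows "ereal (lambda1 * (real i - real d)) \<le> val (coeff X i)"
proof (cases "d < i \<or> i < left_end")
  case True thus ?thesis using X first_factor_coeff_eq_0 unfolding first_factor_def
    by (auto simp: coeff_eq_0)
next
  case False
  have "0 \<le> (lambda1 - lambda0) * (real d - real i)" using lambda0_less_lambda1 False by simp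
  hence "lambda1 * (real i - real d) \<le> nf i - nf d" using nf_d_le[of i] False
    by (simp add: algebra_simps)
  hence "ereal (lambda1 * (real i - real d)) \<le> ereal (nf i - nf d)" by simp
  also have "\<dots> \<le> val (coeff X i)" using first_factor_val_coeff[OF X] False by simp
  finally show ?thesis .
qed

lemma val_coeff_P_ge_line: "ereal (nf d + lambda1 * (real k - real d)) \<le> val (coeff (Papp + dP) k)"
proof -
  consider "n < k" | "k < left_end" "k \<le> n" | "left_end \<le> k" "k \<le> n" by linarith
  thus ?thesis
  proof cases
    case 1
    hence "coeff (Papp + dP) k = 0" using degree_P by (intro coeff_eq_0) auto
    thus ?thesis by simp
  next
    case 2 thus ?thesis using NF_le_val_coeff_P[of k] NF_infinite by simp
  next
    case 3
    hence "ereal (nf d + lambda1 * (real k - real d)) \<le> ereal (nf k)" using nf_ge_tangent_d by simp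
    also have "\<dots> \<le> val (coeff (Papp + dP) k)" using NF_le_val_coeff_P[of k] NF_eq_nf[of k] 3 by simp
    finally show ?thesis .
  qed
qed

lemma cofactor_val_coeff_ge:
  assumes A: "first_factor A" and P: "Papp + dP = A * B"
  shows "ereal (nf d + lambda1 * real j) \<le> val (coeff B j)"
proof -
  have A_d: "degree A = d" "coeff A d = 1" using A unfolding first_factor_def by auto
  have "ereal (nf d - lambda1 * real d + lambda1 * (real j + real d)) \<le> val (coeff B j)"
  proof (rule cofactor_coeffs_ge[OF A_d])
    show "ereal (lambda1 * (real i - real d)) \<le> val (coeff A i)" for i
      by (rule first_factor_coeffs_ge_line[OF A])
    show "ereal (nf d - lambda1 * real d + lambda1 * real k) \<le> val (coeff (A * B) k)" for k
      using val_coeff_P_ge_line[of k] unfolding P by (simp add: algebra_simps)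
  qed
  thus ?thesis by (simp add: algebra_simps)
qed

text \<open>Every other product in \<open>coeff (A * B) d\<close> has valuation \<open>> nf d\<close> because \<open>lambda0 < lambda1\<close>;
  as \<open>d\<close> is a vertex, the term \<open>coeff B 0\<close> must therefore have valuation exactly \<open>nf d\<close>.\<close>

lemma cofactor_val_coeff_0:
  assumes A: "first_factor A" and P: "Papp + dP = A * B"
  shows "val (coeff B 0) = ereal (nf d)"
proof (rule ccontr)
  assume "val (coeff B 0) \<noteq> ereal (nf d)"
  hence B0: "ereal (nf d) < val (coeff B 0)" using cofactor_val_coeff_ge[OF A P, of 0] by simp
  have "ereal (nf d) < val (coeff (Papp + dP) d)" unfolding P coeff_mult
  proof (rule val_sum_gt)
    fix k assume k: "k \<in> {..d}"
    show "ereal (nf d) < val (coeff A k * coeff B (d - k))"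
    proof (cases "k = d \<or> coeff A k = 0")
      case True thus ?thesis using B0 A unfolding first_factor_def by auto
    next
      case False
      hence kd: "k < d" using k by auto
      have kj: "left_end \<le> k" using first_factor_coeff_eq_0[OF A, of k] False by (metis not_less)
      have "0 < (lambda1 - lambda0) * (real d - real k)" using lambda0_less_lambda1 kd by simp
      hence "nf d < (nf k - nf d) + (nf d + lambda1 * real (d - k))"
        using nf_d_le[of k] kj kd by (simp add: algebra_simps of_nat_diff)
      hence "ereal (nf d) < ereal ((nf k - nf d) + (nf d + lambda1 * real (d - k)))" by simp
      also have "\<dots> \<le> val (coeff A k * coeff B (d - k))"
        by (rule val_mult_ge[OF first_factor_val_coeff[OF A kj less_imp_le[OF kd]]
              cofactor_val_coeff_ge[OF A P]])
      finally show ?thesis .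
    qed
  qed simp
  thus False using val_coeff_P_vertex[OF d_vertex] by simp
qed

lemma weighted_division_first_factor:
  assumes X: "first_factor X"
  shows "weighted_division val X d left_end psi lambda0"
proof unfold_locales
  show "degree X = d" "coeff X d = 1" using X unfolding first_factor_def by auto
  show "0 < d" by (rule d_pos)
  show "coeffs_ge left_end psi X (- psi d)" using X by (rule first_factor_coeffs_ge_psi)
  show "psi (i + j) \<le> psi i + lambda0 * real j" if "left_end \<le> i" for i j
    using that by (rule psi_slope)
  show "psi k = psi d + lambda0 * (real k - real d)" if "d \<le> k" for k
    using that by (rule psi_linear)
qed

lemma first_factor_diff_bound:
  assumes A: "first_factor A" "A dvd Papp + dP" and Aapp: "first_factor Aapp" "Aapp dvd Papp"
    and i: "i < d"
  shows "phi_ext val Papp d (real i) - phi_ext val Papp d (real d) + delta \<le> val (coeff (A - Aapp) i)"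
proof -
  obtain B where P: "Papp + dP = A * B" using A(2) by (rule dvdE)
  obtain Bapp where Papp: "Papp = Aapp * Bapp" using Aapp(2) by (rule dvdE)
  interpret weighted_division val Aapp d left_end psi lambda0
    by (rule weighted_division_first_factor[OF Aapp(1)])
  have "dP = (A - Aapp) * B + Aapp * (B - Bapp)" using P Papp by (simp add: algebra_simps)
  hence congr: "((A - Aapp) * B) mod Aapp = dP mod Aapp" by (metis mod_mult_self2)
  have degree_diff: "degree (A - Aapp) < d"
  proof -
    have "degree (A - Aapp) \<le> d"
      using A(1) Aapp(1) degree_diff_le_max[of A Aapp] unfolding first_factor_def by simp
    moreover have "coeff (A - Aapp) d = 0" using A(1) Aapp(1) unfolding first_factor_def by auto
    ultimately show ?thesis using d_pos by (metis leading_coeff_0_iff degree_0 le_neq_implies_less)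
  qed
  have low_diff: "coeff (A - Aapp) k = 0" if "k < left_end" for k
    using first_factor_coeff_eq_0[OF A(1) that] first_factor_coeff_eq_0[OF Aapp(1) that] by simp
  have B_gt: "ereal (nf d + lambda0 * real j) < val (coeff B j)" if "1 \<le> j" for j
  proof -
    have "ereal (nf d + lambda0 * real j) < ereal (nf d + lambda1 * real j)"
      using lambda0_less_lambda1 that by simp
    also have "\<dots> \<le> val (coeff B j)" by (rule cofactor_val_coeff_ge[OF A(1) P])
    finally show ?thesis .
  qed
  have bound: "ereal (psi k + deltar - nf d) \<le> val (coeff (A - Aapp) k)" for k
    by (rule coeffs_ge_of_mult_mod_eq[OF degree_diff low_diff cofactor_val_coeff_0[OF A(1) P]
          B_gt congr coeffs_ge_dP])
  show ?thesis
  proof (cases "i < left_end")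
    case True thus ?thesis using low_diff by simp
  next
    case False
    have "phi_ext val Papp d (real i) = ereal (psi i)" "phi_ext val Papp d (real d) = ereal (nf d)"
      using phi_ext_nat[of i] phi_ext_nat[of d] False i d_less psi_d left_end_less_d by auto
    thus ?thesis using bound[of i] delta_eq by (simp add: algebra_simps)
  qed
qed

end

theorem proposition4p6:
  fixes val :: "'k::field \<Rightarrow> ereal"
    and Papp dP :: "'k poly"
    and phiP :: "real \<Rightarrow> ereal"
    and n d :: nat
  assumes dv: "discrete_valuation val"
    and cpl: "complete_valuation val"
    and Papp_monic: "lead_coeff Papp = 1"
    and deg: "degree Papp = n"
    and d_pos: "0 < d" and d_lt: "d < n"
    and extr: "\<exists>y. val (coeff Papp d) = ereal y \<and>
                    (real d, y) extreme_point_of newton_polygon val Papp"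
    and low: "\<exists>j<d. coeff Papp j \<noteq> 0"
    and phiP_newton: "newton_function (n - 1) phiP"
    and nondeg1: "\<forall>x\<in>{0..real (n - 1)}. newton_fun val Papp x \<le> phiP x"
    and nondeg2: "\<forall>x y. (x, y) extreme_point_of newton_polygon val Papp \<and> x \<le> real (n - 1)
                     \<longrightarrow> ereal y < phiP x"
    and delta_pos: "0 < (INF x \<in> {x\<in>{0..real (n - 1)}. phi_ext val Papp d x \<noteq> \<infinity>}.
                          phiP x - phi_ext val Papp d x)"
    and dP_deg: "degree dP \<le> n - 1"
    and dP_val: "\<forall>i\<le>n - 1. phiP (real i) \<le> val (coeff dP i)"
  shows "(\<forall>x\<in>{0..real n}. newton_fun val (Papp + dP) x = newton_fun val Papp x) \<and>
         (\<forall>A Aapp.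
            lead_coeff A = 1 \<and> degree A = d \<and> A dvd Papp + dP \<and>
            (\<forall>x\<in>{0..real d}. newton_fun val A x =
                newton_fun val Papp x - newton_fun val Papp (real d)) \<and>
            lead_coeff Aapp = 1 \<and> degree Aapp = d \<and> Aapp dvd Papp \<and>
            (\<forall>x\<in>{0..real d}. newton_fun val Aapp x =
                newton_fun val Papp x - newton_fun val Papp (real d))
            \<longrightarrow>
            (\<forall>i<d. phi_ext val Papp d (real i) - phi_ext val Papp d (real d)
                     + (INF x \<in> {x\<in>{0..real (n - 1)}. phi_ext val Papp d x \<noteq> \<infinity>}.
                          phiP x - phi_ext val Papp d x)
                   \<le> val (coeff (A - Aapp) i)))"
proof -
  \<comment> \<open>Completeness of \<open>val\<close> only serves the existence of the factors, which is presupposed here.\<close>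
  interpret newton_perturbation val Papp n d dP phiP
    using assms by unfold_locales auto
  show ?thesis
    using newton_fun_P_eq first_factor_diff_bound unfolding first_factor_def delta_def by blast
qed

end
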